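(* Let $\Phi=\{\varphi_i\}_{i\in\Lambda}$ be a similarity IFS in $\mathbb{R}^d$ with attractor $K$, let $F\subset\mathbb{R}^d$ be a nonempty compact set with $\varphi_iF\subseteq F$ for all $i\in\Lambda$, and let $c>0$. (1) If $\Phi$ is $(F,c)$-diffuse, then $\Phi$ is $(K,c)$-diffuse. (2) If $\Phi$ is $(K,c)$-diffuse, then for every $c'\in(0,c)$ and all large enough $n$, the IFS $\{\varphi_i\}_{i\in\Lambda^n}$ is $(F,c')$-diffuse.
   Context: A similarity IFS is a finite family of contracting similarities $\varphi_i$ of $\mathbb{R}^d$; its attractor $K$ is the unique nonempty compact set with $K=\bigcup_i\varphi_iK$; for $i=i_1\dots i_n$, $\varphi_i=\varphi_{i_1}\circ\dots\circ\varphi_{i_n}$. For a compact $F$ with $\varphi_iF\subseteq F$ for all $i$ and $c>0$, an IFS $\{\varphi_i\}_{i\in A}$ is $(F,c)$-diffuse if for every affine hyperplane $\mathcal{L}\subseteq\mathbb{R}^d$ there is $i\in A$ with $\varphi_iF\cap\mathcal{L}^{(c)}=\emptyset$, where $\mathcal{L}^{(c)}$ is the open $c$-neighborhood of $\mathcal{L}$. *)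

theory Defs
  imports "HOL-Analysis.Analysis"
begin

definition contracting_similarity :: "('a::euclidean_space \<Rightarrow> 'a) \<Rightarrow> bool" where
  "contracting_similarity f \<longleftrightarrow>
     (\<exists>r. 0 < r \<and> r < 1 \<and> (\<forall>x y. dist (f x) (f y) = r * dist x y))"

definition similarity_IFS :: "'i set \<Rightarrow> ('i \<Rightarrow> 'a::euclidean_space \<Rightarrow> 'a) \<Rightarrow> bool" where
  "similarity_IFS \<Lambda> \<phi> \<longleftrightarrow> finite \<Lambda> \<and> \<Lambda> \<noteq> {} \<and> (\<forall>i\<in>\<Lambda>. contracting_similarity (\<phi> i))"

definition is_attractor :: "'i set \<Rightarrow> ('i \<Rightarrow> 'a::euclidean_space \<Rightarrow> 'a) \<Rightarrow> 'a set \<Rightarrow> bool" where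
  "is_attractor \<Lambda> \<phi> K \<longleftrightarrow> compact K \<and> K \<noteq> {} \<and> K = (\<Union>i\<in>\<Lambda>. \<phi> i ` K)"

definition affine_hyperplane :: "'a::euclidean_space set \<Rightarrow> bool" where
  "affine_hyperplane L \<longleftrightarrow> (\<exists>a b. a \<noteq> 0 \<and> L = {x. a \<bullet> x = b})"

definition open_nbhd :: "'a::metric_space set \<Rightarrow> real \<Rightarrow> 'a set" where
  "open_nbhd L c = {x. \<exists>y\<in>L. dist x y < c}"

definition diffuse :: "'a::euclidean_space set \<Rightarrow> real \<Rightarrow> 'i set \<Rightarrow> ('i \<Rightarrow> 'a \<Rightarrow> 'a) \<Rightarrow> bool" where
  "diffuse F c A \<phi> \<longleftrightarrow>
     (\<forall>L. affine_hyperplane L \<longrightarrow> (\<exists>i\<in>A. \<phi> i ` F \<inter> open_nbhd L c = {}))"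

text \<open>Composition along a word: phi_{i1...in} = phi_i1 o ... o phi_in.\<close>
definition word_map :: "('i \<Rightarrow> 'a \<Rightarrow> 'a) \<Rightarrow> 'i list \<Rightarrow> 'a \<Rightarrow> 'a" where
  "word_map \<phi> w = foldr (\<lambda>i f. \<phi> i \<circ> f) w id"

definition words :: "'i set \<Rightarrow> nat \<Rightarrow> 'i list set" where
  "words \<Lambda> n = {w. set w \<subseteq> \<Lambda> \<and> length w = n}"

end

theory Submission
  imports Defs
begin

text \<open>
  Part (1): the attractor lies in every nonempty closed set mapped into itself by the IFS, since
  the largest distance from a point of K to F is attained and is scaled down by some map of the
  IFS; so a map that keeps \<open>\<phi>\<^sub>i F\<close> away from a hyperplane keeps \<open>\<phi>\<^sub>i K\<close> away from it as well.
  Part (2): for a word \<open>w = i i \<dots> i\<close> of length n, the set \<open>\<phi>\<^sub>w F\<close> lies within \<open>R\<^sup>n diam (F \<union> K)\<close>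
  of \<open>\<phi>\<^sub>w K \<subseteq> \<phi>\<^sub>i K\<close>, where R < 1 is the largest contraction ratio. Once this is below
  \<open>c - c'\<close>, the c-separation of \<open>\<phi>\<^sub>i K\<close> from a hyperplane gives a \<open>c'\<close>-separation of \<open>\<phi>\<^sub>w F\<close>.
\<close>

lemma word_map_Nil [simp]: "word_map \<phi> [] = id"
  by (simp add: word_map_def)

lemma word_map_Cons [simp]: "word_map \<phi> (i # w) = \<phi> i \<circ> word_map \<phi> w"
  by (simp add: word_map_def)

lemma replicate_in_words: "i \<in> \<Lambda> \<Longrightarrow> replicate n i \<in> words \<Lambda> n"
  by (auto simp: words_def)

lemma word_map_image_subset:
  assumes "\<forall>i\<in>\<Lambda>. \<phi> i ` K \<subseteq> K" and "set w \<subseteq> \<Lambda>"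
  shows "word_map \<phi> w ` K \<subseteq> K"
  using assms(2) by (induction w) (use assms(1) in \<open>auto simp: image_subset_iff\<close>)

lemma dist_word_map_le:
  fixes \<phi> :: "'i \<Rightarrow> 'a::metric_space \<Rightarrow> 'a"
  assumes lip: "\<forall>i\<in>\<Lambda>. \<forall>x y. dist (\<phi> i x) (\<phi> i y) \<le> R * dist x y" and "0 \<le> R"
    and "set w \<subseteq> \<Lambda>"
  shows "dist (word_map \<phi> w x) (word_map \<phi> w y) \<le> R ^ length w * dist x y"
  using assms(3)
proof (induction w)
  case Nil
  then show ?case by simp
next
  case (Cons i w)
  have "dist (word_map \<phi> (i # w) x) (word_map \<phi> (i # w) y)
      \<le> R * dist (word_map \<phi> w x) (word_map \<phi> w y)"
    using lip Cons.prems by simp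
  also have "\<dots> \<le> R * (R ^ length w * dist x y)"
    using Cons \<open>0 \<le> R\<close> by (simp add: mult_left_mono)
  finally show ?case by simp
qed

lemma similarity_IFS_uniform_contraction:
  assumes "similarity_IFS \<Lambda> \<phi>"
  obtains R where "0 \<le> R" "R < 1" "\<forall>i\<in>\<Lambda>. \<forall>x y. dist (\<phi> i x) (\<phi> i y) \<le> R * dist x y"
proof -
  have "\<forall>i\<in>\<Lambda>. \<exists>r. 0 < r \<and> r < 1 \<and> (\<forall>x y. dist (\<phi> i x) (\<phi> i y) = r * dist x y)"
    using assms by (simp add: similarity_IFS_def contracting_similarity_def)
  then obtain \<rho> where \<rho>: "\<forall>i\<in>\<Lambda>. 0 < \<rho> i \<and> \<rho> i < 1 \<and> (\<forall>x y. dist (\<phi> i x) (\<phi> i y) = \<rho> i * dist x y)"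
    by (rule bchoice[elim_format]) blast
  have fin: "finite (\<rho> ` \<Lambda>)" and ne: "\<rho> ` \<Lambda> \<noteq> {}"
    using assms by (auto simp: similarity_IFS_def)
  show ?thesis
  proof
    show "0 \<le> Max (\<rho> ` \<Lambda>)" "Max (\<rho> ` \<Lambda>) < 1"
      using \<rho> fin ne by (auto simp: Max_ge_iff less_le_not_le)
    show "\<forall>i\<in>\<Lambda>. \<forall>x y. dist (\<phi> i x) (\<phi> i y) \<le> Max (\<rho> ` \<Lambda>) * dist x y"
      using \<rho> fin by (auto intro!: mult_right_mono)
  qed
qed

lemma attractor_subset_closed_invariant:
  fixes \<phi> :: "'i \<Rightarrow> 'a::heine_borel \<Rightarrow> 'a"
  assumes "compact K" and K_covered: "K \<subseteq> (\<Union>i\<in>\<Lambda>. \<phi> i ` K)"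
    and "closed F" "F \<noteq> {}" and F_inv: "\<forall>i\<in>\<Lambda>. \<phi> i ` F \<subseteq> F"
    and "0 \<le> R" "R < 1" and lip: "\<forall>i\<in>\<Lambda>. \<forall>x y. dist (\<phi> i x) (\<phi> i y) \<le> R * dist x y"
  shows "K \<subseteq> F"
proof (cases "K = {}")
  case False
  obtain x0 where "x0 \<in> K" and x0_max: "\<And>x. x \<in> K \<Longrightarrow> infdist x F \<le> infdist x0 F"
    using continuous_attains_sup[OF \<open>compact K\<close> False continuous_on_infdist[OF continuous_on_id]]
    by blast
  then obtain i y where "i \<in> \<Lambda>" "y \<in> K" and x0: "x0 = \<phi> i y"
    using K_covered by blast
  obtain f where "f \<in> F" and f: "infdist y F = dist y f"
    using infdist_attains_inf[OF \<open>closed F\<close> \<open>F \<noteq> {}\<close>] by blast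
  have "infdist x0 F \<le> dist x0 (\<phi> i f)"
    using F_inv \<open>i \<in> \<Lambda>\<close> \<open>f \<in> F\<close> by (blast intro: infdist_le)
  also have "\<dots> \<le> R * infdist y F"
    using lip \<open>i \<in> \<Lambda>\<close> x0 f by simp
  also have "\<dots> \<le> R * infdist x0 F"
    using x0_max[OF \<open>y \<in> K\<close>] \<open>0 \<le> R\<close> by (rule mult_left_mono)
  finally have "infdist x0 F = 0"
    using \<open>R < 1\<close> infdist_nonneg[of x0 F] by (simp add: mult_le_cancel_right1)
  then have "infdist x F = 0" if "x \<in> K" for x
    using x0_max[OF that] infdist_nonneg[of x F] by linarith
  then show ?thesis
    using in_closure_iff_infdist_zero[OF \<open>F \<noteq> {}\<close>] closure_closed[OF \<open>closed F\<close>] by blast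
qed simp

lemma diffuse_subset:
  assumes "diffuse F c A \<phi>" and "K \<subseteq> F"
  shows "diffuse K c A \<phi>"
  unfolding diffuse_def
proof (intro allI impI)
  fix L :: "'a set"
  assume "affine_hyperplane L"
  then obtain i where "i \<in> A" "\<phi> i ` F \<inter> open_nbhd L c = {}"
    using assms(1) unfolding diffuse_def by blast
  moreover have "\<phi> i ` K \<subseteq> \<phi> i ` F"
    using \<open>K \<subseteq> F\<close> by (rule image_mono)
  ultimately show "\<exists>i\<in>A. \<phi> i ` K \<inter> open_nbhd L c = {}"
    by blast
qed

lemma diffuse_of_images_near:
  assumes "diffuse K c A \<psi>" and "c' + \<delta> \<le> c"
    and near: "\<forall>i\<in>A. \<exists>j\<in>B. \<phi> j ` F \<subseteq> open_nbhd (\<psi> i ` K) \<delta>"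
  shows "diffuse F c' B \<phi>"
  unfolding diffuse_def
proof (intro allI impI)
  fix L :: "'a set"
  assume "affine_hyperplane L"
  then obtain i where "i \<in> A" and far: "\<psi> i ` K \<inter> open_nbhd L c = {}"
    using assms(1) unfolding diffuse_def by blast
  obtain j where "j \<in> B" and j: "\<phi> j ` F \<subseteq> open_nbhd (\<psi> i ` K) \<delta>"
    using near \<open>i \<in> A\<close> by blast
  have "x \<notin> open_nbhd L c'" if "x \<in> \<phi> j ` F" for x
  proof
    assume "x \<in> open_nbhd L c'"
    then obtain p where "p \<in> L" "dist x p < c'"
      unfolding open_nbhd_def by blast
    moreover have "x \<in> open_nbhd (\<psi> i ` K) \<delta>"
      using j that by (rule subsetD)
    then obtain z where "z \<in> \<psi> i ` K" "dist x z < \<delta>"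
      unfolding open_nbhd_def by blast
    ultimately have "dist z p < c"
      using dist_triangle[of z p x] dist_commute[of z x] \<open>c' + \<delta> \<le> c\<close> by linarith
    with \<open>p \<in> L\<close> have "z \<in> open_nbhd L c"
      unfolding open_nbhd_def by blast
    with far \<open>z \<in> \<psi> i ` K\<close> show False by blast
  qed
  then show "\<exists>j\<in>B. \<phi> j ` F \<inter> open_nbhd L c' = {}"
    using \<open>j \<in> B\<close> by blast
qed

lemma word_map_replicate_image_near:
  fixes \<phi> :: "'i \<Rightarrow> 'a::metric_space \<Rightarrow> 'a"
  assumes K_inv: "\<forall>i\<in>\<Lambda>. \<phi> i ` K \<subseteq> K" and "K \<noteq> {}"
    and lip: "\<forall>i\<in>\<Lambda>. \<forall>x y. dist (\<phi> i x) (\<phi> i y) \<le> R * dist x y" and "0 \<le> R"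
    and "i \<in> \<Lambda>" "0 < n" and B: "\<forall>y\<in>F. \<forall>z\<in>K. dist y z \<le> B" and "R ^ n * B < \<delta>"
  shows "word_map \<phi> (replicate n i) ` F \<subseteq> open_nbhd (\<phi> i ` K) \<delta>"
proof
  let ?w = "replicate n i"
  have replicate_set: "set (replicate k i) \<subseteq> \<Lambda>" for k
    using \<open>i \<in> \<Lambda>\<close> by (simp add: set_replicate_conv_if)
  obtain m where n: "n = Suc m"
    using \<open>0 < n\<close> gr0_implies_Suc by blast
  obtain z where "z \<in> K"
    using \<open>K \<noteq> {}\<close> by blast
  have "word_map \<phi> (replicate m i) z \<in> K"
    using word_map_image_subset[OF K_inv replicate_set] \<open>z \<in> K\<close> by blast
  then have z: "word_map \<phi> ?w z \<in> \<phi> i ` K"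
    using n by simp
  fix x
  assume "x \<in> word_map \<phi> ?w ` F"
  then obtain y where "y \<in> F" and x: "x = word_map \<phi> ?w y"
    by blast
  have "dist x (word_map \<phi> ?w z) \<le> R ^ n * dist y z"
    using dist_word_map_le[OF lip \<open>0 \<le> R\<close> replicate_set] x by simp
  also have "\<dots> \<le> R ^ n * B"
    using B \<open>y \<in> F\<close> \<open>z \<in> K\<close> \<open>0 \<le> R\<close> by (simp add: mult_left_mono)
  also have "\<dots> < \<delta>"
    by fact
  finally show "x \<in> open_nbhd (\<phi> i ` K) \<delta>"
    using z unfolding open_nbhd_def by blast
qed

lemma eventually_diffuse_words:
  fixes \<phi> :: "'i \<Rightarrow> 'a::euclidean_space \<Rightarrow> 'a"
  assumes diffuse_K: "diffuse K c \<Lambda> \<phi>" and "c' < c"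
    and "bounded K" "K \<noteq> {}" and K_inv: "\<forall>i\<in>\<Lambda>. \<phi> i ` K \<subseteq> K" and "bounded F"
    and "0 \<le> R" "R < 1" and lip: "\<forall>i\<in>\<Lambda>. \<forall>x y. dist (\<phi> i x) (\<phi> i y) \<le> R * dist x y"
  shows "eventually (\<lambda>n. diffuse F c' (words \<Lambda> n) (word_map \<phi>)) sequentially"
proof -
  define B where "B = diameter (F \<union> K)"
  have B: "\<forall>y\<in>F. \<forall>z\<in>K. dist y z \<le> B"
    unfolding B_def using \<open>bounded F\<close> \<open>bounded K\<close> by (auto intro: diameter_bounded_bound)
  have "(\<lambda>n. R ^ n * B) \<longlonglongrightarrow> 0"
    using \<open>0 \<le> R\<close> \<open>R < 1\<close> by (intro tendsto_mult_left_zero LIMSEQ_power_zero) simp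
  then have "eventually (\<lambda>n. R ^ n * B < c - c') sequentially"
    by (rule order_tendstoD(2)) (use \<open>c' < c\<close> in simp)
  moreover have "eventually (\<lambda>n. 0 < n) sequentially"
    by (rule eventually_gt_at_top)
  ultimately show ?thesis
  proof eventually_elim
    case (elim n)
    have "word_map \<phi> (replicate n i) ` F \<subseteq> open_nbhd (\<phi> i ` K) (c - c')" if "i \<in> \<Lambda>" for i
      using word_map_replicate_image_near[OF K_inv \<open>K \<noteq> {}\<close> lip \<open>0 \<le> R\<close> that _ B] elim
      by simp
    then have "\<forall>i\<in>\<Lambda>. \<exists>w\<in>words \<Lambda> n. word_map \<phi> w ` F \<subseteq> open_nbhd (\<phi> i ` K) (c - c')"
      by (meson replicate_in_words)
    then show ?case
      by (intro diffuse_of_images_near[OF diffuse_K, of c' "c - c'"]) auto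
  qed
qed

theorem lemma3p8:
  fixes \<Lambda> :: "'i set" and \<phi> :: "'i \<Rightarrow> 'a::euclidean_space \<Rightarrow> 'a"
    and K F :: "'a set" and c :: real
  assumes "similarity_IFS \<Lambda> \<phi>"
    and "is_attractor \<Lambda> \<phi> K"
    and "compact F" and "F \<noteq> {}"
    and "\<forall>i\<in>\<Lambda>. \<phi> i ` F \<subseteq> F"
    and "c > 0"
  shows "(diffuse F c \<Lambda> \<phi> \<longrightarrow> diffuse K c \<Lambda> \<phi>)
       \<and> (diffuse K c \<Lambda> \<phi> \<longrightarrow>
           (\<forall>c'. 0 < c' \<and> c' < c \<longrightarrow>
              (\<exists>N. \<forall>n\<ge>N. diffuse F c' (words \<Lambda> n) (word_map \<phi>))))"
proof -
  obtain R where R: "0 \<le> R" "R < 1" "\<forall>i\<in>\<Lambda>. \<forall>x y. dist (\<phi> i x) (\<phi> i y) \<le> R * dist x y"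
    using similarity_IFS_uniform_contraction[OF assms(1)] by blast
  have "compact K" "K \<noteq> {}" and K_eq: "K = (\<Union>i\<in>\<Lambda>. \<phi> i ` K)"
    using assms(2) by (auto simp: is_attractor_def)
  have "K \<subseteq> F"
    using attractor_subset_closed_invariant[OF \<open>compact K\<close> equalityD1[OF K_eq]
        compact_imp_closed[OF \<open>compact F\<close>] \<open>F \<noteq> {}\<close> assms(5) R] .
  then have part1: "diffuse F c \<Lambda> \<phi> \<longrightarrow> diffuse K c \<Lambda> \<phi>"
    using diffuse_subset by blast
  have K_inv: "\<forall>i\<in>\<Lambda>. \<phi> i ` K \<subseteq> K"
    using K_eq by blast
  have part2: "\<exists>N. \<forall>n\<ge>N. diffuse F c' (words \<Lambda> n) (word_map \<phi>)"
    if "diffuse K c \<Lambda> \<phi>" "c' < c" for c'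
    using eventually_diffuse_words[OF that compact_imp_bounded[OF \<open>compact K\<close>] \<open>K \<noteq> {}\<close>
        K_inv compact_imp_bounded[OF \<open>compact F\<close>] R]
    unfolding eventually_sequentially .
  show ?thesis
    using part1 part2 by blast
qed

end
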